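(* For $d\in\mathbb{N}$ and $i\in\{1,\dots,d\}$, $$\mu_i(T_d)\leqslant\frac{i}{2}\Big(1+\frac{d-i}{d+1}\Big).$$
   Context: $T_d=\operatorname{conv}(-\mathbb{1}_d,e_1,\dots,e_d)\subseteq\mathbb{R}^d$ is the standard terminal simplex. For a convex body $K\subseteq\mathbb{R}^d$ and $i\in\{1,\dots,d\}$, $\mu_i(K)=\min\{\mu\ge0:(\mu K+\mathbb{Z}^d)\cap U\ne\emptyset$ for every $(d-i)$-dimensional affine subspace $U\subseteq\mathbb{R}^d\}$. *)

theory Defs
  imports "HOL-Analysis.Analysis"
begin

definition int_lattice :: "(real ^ 'n) set" where
  "int_lattice = {z. \<forall>j. z $ j \<in> \<int>}"

definition terminal_simplex :: "(real ^ 'n) set" where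
  "terminal_simplex = convex hull (insert (- (\<chi> j. 1)) (range (\<lambda>j. axis j 1)))"

definition lattice_translates :: "real \<Rightarrow> (real ^ 'n) set \<Rightarrow> (real ^ 'n) set" where
  "lattice_translates \<mu> K = {\<mu> *\<^sub>R k + z | k z. k \<in> K \<and> z \<in> int_lattice}"

definition covering_minimum :: "nat \<Rightarrow> (real ^ 'n) set \<Rightarrow> real" where
  "covering_minimum i K = Inf {\<mu>. \<mu> \<ge> 0 \<and>
     (\<forall>U :: (real ^ 'n) set. affine U \<and> aff_dim U = int (CARD('n) - i)
        \<longrightarrow> lattice_translates \<mu> K \<inter> U \<noteq> {})}"

end

theory Submission
  imports Defs
begin

(*
  A (d-i)-dimensional affine subspace U of R^d meets a coordinate subspace of dimension at
  most i, so U contains a point x supported on a set J of at most i coordinates.  The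
  terminal simplex is {t. sum t \<le> 1 \<and> (\<forall>j. sum t - (d+1) t_j \<le> 1)}, so x lies in
  mu T_d + Z^d as soon as some w \<equiv> x (mod Z^J) satisfies sum w \<le> mu and
  sum w - (d+1) min w \<le> mu.  Lifts of x|J whose entries are pairwise within 1 of each
  other realise every sum in a coset of Z; take one, c, whose sum lies in a suitable unit
  interval.  For j \<in> J, adding 1 to the entries of c smaller than c_j gives a lift with
  minimum c_j, and averaging over j shows that one of these lifts works.
*)

lemma covering_minimum_le:
  assumes "0 \<le> \<mu>"
    and "\<And>U. affine U \<Longrightarrow> aff_dim U = int (CARD('n) - i) \<Longrightarrow> lattice_translates \<mu> K \<inter> U \<noteq> {}"
  shows "covering_minimum i (K :: (real ^ 'n) set) \<le> \<mu>"
  unfolding covering_minimum_def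
  by (rule cInf_lower) (use assms in \<open>auto intro: bdd_belowI[of _ 0]\<close>)

lemma mem_terminal_simplexI:
  fixes t :: "real ^ 'n"
  assumes sum_le: "(\<Sum>j\<in>UNIV. t $ j) \<le> 1"
    and facet_le: "\<And>j. (\<Sum>j\<in>UNIV. t $ j) - (real CARD('n) + 1) * t $ j \<le> 1"
  shows "t \<in> terminal_simplex"
proof -
  define s where "s = (\<Sum>j\<in>UNIV. t $ j)"
  define d1 where "d1 = real CARD('n) + 1"
  define m1 :: "real ^ 'n" where "m1 = - (\<chi> j. 1)"
  define S where "S = insert m1 (range (\<lambda>j. axis j 1))"
  define w0 where "w0 = (1 - s) / d1"
  \<comment> \<open>barycentric coordinates: w0 at the vertex m1 and t $ j + w0 at e_j, as t \<bullet> e_j = t $ j\<close>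
  define u where "u p = (if p = m1 then w0 else t \<bullet> p + w0)" for p
  have d1_pos: "0 < d1" unfolding d1_def by simp
  have "m1 $ j \<noteq> axis j 1 $ j" for j
    unfolding m1_def by simp
  then have m1_notin: "m1 \<notin> range (\<lambda>j. axis j 1)"
    by (metis rangeE)
  have u_axis: "u (axis j 1) = t $ j + w0" for j
    using m1_notin by (auto simp: u_def cart_eq_inner_axis)
  have sum_S: "sum f S = f m1 + (\<Sum>j\<in>UNIV. f (axis j 1))" for f :: "real ^ 'n \<Rightarrow> 'b::comm_monoid_add"
    unfolding S_def using m1_notin by (simp add: sum.reindex inj_def axis_eq_axis)
  have "0 \<le> w0" unfolding w0_def s_def using sum_le d1_pos by simp
  moreover have "0 \<le> t $ j + w0" for j
  proof -
    have "t $ j + w0 = (d1 * t $ j + 1 - s) / d1" unfolding w0_def using d1_pos by (simp add: field_simps)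
    then show ?thesis using facet_le[of j] d1_pos unfolding s_def d1_def by simp
  qed
  ultimately have "\<forall>p\<in>S. 0 \<le> u p" unfolding S_def using u_axis by (auto simp: u_def)
  moreover have "sum u S = 1"
  proof -
    have "sum u S = d1 * w0 + s"
      unfolding sum_S u_axis s_def d1_def by (simp add: u_def sum.distrib algebra_simps)
    then show ?thesis unfolding w0_def using d1_pos by simp
  qed
  moreover have "(\<Sum>p\<in>S. u p *\<^sub>R p) = t"
    unfolding vec_eq_iff
  proof
    fix i
    have "(\<Sum>p\<in>S. u p *\<^sub>R p) $ i = - w0 + (\<Sum>j\<in>UNIV. (t $ j + w0) * axis j 1 $ i)"
      unfolding sum_S u_axis by (simp add: u_def m1_def)
    also have "\<dots> = t $ i" by (simp add: axis_def if_distrib cong: if_cong)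
    finally show "(\<Sum>p\<in>S. u p *\<^sub>R p) $ i = t $ i" .
  qed
  moreover have "finite S" unfolding S_def by simp
  ultimately have "t \<in> convex hull S"
    by (auto simp: convex_hull_finite)
  then show ?thesis unfolding terminal_simplex_def S_def m1_def .
qed

lemma affine_meets_span_of_basis_subset:
  fixes U :: "'a::euclidean_space set"
  assumes "affine U" "U \<noteq> {}"
  obtains x B where "x \<in> U" "B \<subseteq> Basis" "x \<in> span B" "int (card B) + aff_dim U \<le> DIM('a)"
proof -
  obtain a where a: "a \<in> U" using assms(2) by blast
  define L where "L = (+) (- a) ` U"
  have L: "subspace L" unfolding L_def using affine_diffs_subspace[OF assms(1) a] by simp
  have aff_dim_U: "aff_dim U = int (dim L)"
    unfolding L_def by (rule aff_dim_eq_dim) (simp add: a hull_inc)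
  obtain BL where BL: "BL \<subseteq> L" "independent BL" "L \<subseteq> span BL" "card BL = dim L"
    using basis_exists by blast
  obtain B' where B': "BL \<subseteq> B'" "B' \<subseteq> BL \<union> Basis" "independent B'" "BL \<union> Basis \<subseteq> span B'"
    using maximal_independent_subset_extend[of BL "BL \<union> Basis"] BL(2) by blast
  define B where "B = B' - BL"
  have "Basis \<subseteq> span B'" using B'(4) by blast
  then have "span B' = UNIV"
    using span_minimal[OF _ subspace_span, of Basis B'] by auto
  moreover have "B' = BL \<union> B" unfolding B_def using B'(1) by blast
  ultimately have "- a \<in> span (BL \<union> B)" by simp
  then obtain l v where lv: "- a = l + v" "l \<in> span BL" "v \<in> span B"
    unfolding span_Un by blast
  have "l \<in> L" using lv(2) span_minimal[OF BL(1) L] by blast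
  then obtain u where "u \<in> U" "l = - a + u" unfolding L_def by blast
  moreover have "u = - v" using lv(1) \<open>l = - a + u\<close> by (simp add: eq_neg_iff_add_eq_0)
  ultimately have "- v \<in> U" by simp
  moreover have "- v \<in> span B" using lv(3) by (rule span_neg)
  moreover have "B \<subseteq> Basis" unfolding B_def using B'(2) by blast
  moreover have "int (card B) + aff_dim U \<le> DIM('a)"
  proof -
    have "finite B'" "card B' \<le> DIM('a)" using independent_bound[OF B'(3)] by auto
    moreover have "card BL \<le> card B'" using card_mono[OF \<open>finite B'\<close> B'(1)] .
    ultimately show ?thesis
      unfolding aff_dim_U B_def using B'(1) BL(4) by (simp add: card_Diff_subset finite_subset)
  qed
  ultimately show thesis using that by blast
qed

lemma affine_contains_sparse_point:
  fixes U :: "(real ^ 'n) set"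
  assumes "affine U" "U \<noteq> {}"
  obtains x where "x \<in> U" "int (card {j. x $ j \<noteq> 0}) + aff_dim U \<le> CARD('n)"
proof -
  obtain x B where x: "x \<in> U" "B \<subseteq> Basis" "x \<in> span B" "int (card B) + aff_dim U \<le> CARD('n)"
    using affine_meets_span_of_basis_subset[OF assms] by auto
  have "(\<lambda>j. axis j 1) ` {j. x $ j \<noteq> 0} \<subseteq> B"
    using x(2,3) by (auto simp: span_substd_basis cart_eq_inner_axis)
  then have "card {j. x $ j \<noteq> 0} \<le> card B"
    using x(2) by (intro card_inj_on_le) (auto simp: inj_on_def axis_eq_axis finite_subset)
  then show thesis using that x by simp
qed

definition balanced_lift :: "'a set \<Rightarrow> ('a \<Rightarrow> real) \<Rightarrow> ('a \<Rightarrow> real) \<Rightarrow> bool" where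
  "balanced_lift J y c \<longleftrightarrow> (\<forall>l\<in>J. c l - y l \<in> \<int>) \<and> (\<forall>l\<in>J. \<forall>l'\<in>J. c l - c l' \<le> 1)"

lemma balanced_lift_increment:
  assumes "finite J" "J \<noteq> {}" "balanced_lift J y c"
  obtains c' where "balanced_lift J y c'" "sum c' J = sum c J + 1"
proof -
  have "Min (c ` J) \<in> c ` J" using assms(1,2) by simp
  then obtain j where j: "j \<in> J" "c j = Min (c ` J)" by (metis imageE)
  then have j_min: "c j \<le> c l" if "l \<in> J" for l
    using assms(1) that by simp
  have spread: "c l - c l' \<le> 1" if "l \<in> J" "l' \<in> J" for l l'
    using assms(3) that unfolding balanced_lift_def by blast
  define c' where "c' = c(j := c j + 1)"
  have "c' l - y l = (c l - y l) + of_int (of_bool (l = j))" for l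
    by (simp add: c'_def)
  then have "c' l - y l \<in> \<int>" if "l \<in> J" for l
    using assms(3) that unfolding balanced_lift_def by (metis Ints_add Ints_of_int)
  moreover have "c' l - c' l' \<le> 1" if "l \<in> J" "l' \<in> J" for l l'
    using spread[OF that] spread[OF that(1) j(1)] j_min[OF that(1)] j_min[OF that(2)]
    by (simp add: c'_def)
  ultimately have "balanced_lift J y c'" unfolding balanced_lift_def by blast
  moreover have "sum c' J = sum c J + 1"
    unfolding c'_def using assms(1) j(1) by (simp add: sum.remove)
  ultimately show thesis by (rule that)
qed

lemma balanced_lift_add_nat:
  assumes "finite J" "J \<noteq> {}" "balanced_lift J y c"
  obtains c' where "balanced_lift J y c'" "sum c' J = sum c J + real n"
proof (induction n arbitrary: thesis)
  case 0
  then show ?case using assms(3) by simp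
next
  case (Suc n)
  obtain c' where "balanced_lift J y c'" "sum c' J = sum c J + real n"
    using Suc.IH by blast
  then obtain c'' where "balanced_lift J y c''" "sum c'' J = sum c J + real n + 1"
    using balanced_lift_increment[OF assms(1,2)] by metis
  then show ?case using Suc.prems by simp
qed

lemma balanced_lift_sum_in_unit_interval:
  assumes "finite J" "J \<noteq> {}"
  obtains c where "balanced_lift J y c" "A \<le> sum c J" "sum c J < A + 1"
proof -
  define k where "k = int (card J)"
  define F where "F = (\<Sum>l\<in>J. frac (y l))"
  define m where "m = \<lceil>A - F\<rceil>"
  define c0 where "c0 = (\<lambda>l. frac (y l) + of_int (m div k))"
  have "frac (y l) + of_int (m div k) - y l = of_int (m div k - \<lfloor>y l\<rfloor>)" for l
    by (simp add: frac_def)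
  then have "balanced_lift J y c0"
    unfolding balanced_lift_def c0_def
    using frac_lt_1 frac_ge_0 by (smt (verit) Ints_of_int)
  then obtain c where c: "balanced_lift J y c" "sum c J = sum c0 J + real (nat (m mod k))"
    using balanced_lift_add_nat[OF assms] by blast
  have "m mod k \<ge> 0" using assms unfolding k_def by (simp add: card_gt_0_iff)
  moreover have "real (card J) * of_int (m div k) + of_int (m mod k) = of_int m"
    unfolding k_def by (metis mult_div_mod_eq of_int_add of_int_mult of_int_of_nat_eq)
  ultimately have "sum c J = F + of_int m"
    unfolding c(2) c0_def F_def by (simp add: sum.distrib)
  then show ?thesis
    using that[OF c(1)] unfolding m_def by linarith
qed

lemma sum_of_bool_neq_le:
  assumes "finite J" "j \<in> J"
  shows "(\<Sum>l\<in>J. of_bool (c l \<noteq> c j) :: real) \<le> real (card J) - 1"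
proof -
  have "J \<inter> {l. c l \<noteq> c j} \<subseteq> J - {j}" by auto
  then have "card (J \<inter> {l. c l \<noteq> c j}) \<le> card J - 1"
    using assms card_mono[of "J - {j}"] by auto
  moreover have "card J \<ge> 1" using assms by (auto simp: Suc_le_eq card_gt_0_iff)
  ultimately show ?thesis using assms(1) by (simp add: of_nat_diff[symmetric])
qed

lemma sum_of_bool_less_le:
  fixes c :: "'a \<Rightarrow> 'b::linorder"
  assumes "finite J" "j \<in> J"
  shows "(\<Sum>l\<in>J. of_bool (c l < c j) :: real) \<le> real (card J) - 1"
  using sum_mono[of J "\<lambda>l. of_bool (c l < c j) :: real" "\<lambda>l. of_bool (c l \<noteq> c j)"]
    sum_of_bool_neq_le[OF assms, of c] by fastforce

lemma sum_sum_of_bool_less_le: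
  fixes c :: "'a \<Rightarrow> 'b::linorder"
  assumes "finite J"
  shows "2 * (\<Sum>j\<in>J. \<Sum>l\<in>J. of_bool (c l < c j) :: real) \<le> real (card J) * (real (card J) - 1)"
proof -
  have "2 * (\<Sum>j\<in>J. \<Sum>l\<in>J. of_bool (c l < c j) :: real)
      = (\<Sum>j\<in>J. \<Sum>l\<in>J. of_bool (c l < c j)) + (\<Sum>j\<in>J. \<Sum>l\<in>J. of_bool (c j < c l))"
    using sum.swap[of "\<lambda>j l. of_bool (c l < c j) :: real" J J] by simp
  also have "\<dots> = (\<Sum>j\<in>J. \<Sum>l\<in>J. of_bool (c l \<noteq> c j))"
    by (simp add: sum.distrib[symmetric] of_bool_def neq_iff; intro sum.cong refl; auto)
  also have "\<dots> \<le> (\<Sum>j\<in>J. real (card J) - 1)"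
    by (intro sum_mono sum_of_bool_neq_le assms)
  finally show ?thesis by simp
qed

lemma balanced_lift_raise_below:
  assumes "balanced_lift J y c" "j \<in> J" "l \<in> J"
  shows "c l + of_bool (c l < c j) - y l \<in> \<int>" and "c j \<le> c l + of_bool (c l < c j)"
proof -
  have "c l + of_bool (c l < c j) - y l = (c l - y l) + of_int (of_bool (c l < c j))" by simp
  then show "c l + of_bool (c l < c j) - y l \<in> \<int>"
    using assms unfolding balanced_lift_def by (metis Ints_add Ints_of_int)
  have "c j - c l \<le> 1"
    using assms unfolding balanced_lift_def by blast
  then show "c j \<le> c l + of_bool (c l < c j)"
    by (cases "c l < c j") auto
qed

lemma ex_le_of_sum_le_card_mult:
  fixes f :: "'a \<Rightarrow> real"
  assumes "finite J" "J \<noteq> {}" "sum f J \<le> real (card J) * \<mu>"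
  obtains j where "j \<in> J" "f j \<le> \<mu>"
proof (rule ccontr)
  assume "\<not> thesis"
  then have "(\<Sum>j\<in>J. \<mu>) < sum f J"
    using that assms(1,2) by (intro sum_strict_mono) force+
  then show False using assms(3) by simp
qed

lemma ex_pivot_with_small_excess:
  fixes c :: "'a \<Rightarrow> real" and D \<mu> :: real
  assumes fin: "finite J" and ne: "J \<noteq> {}"
    and sum_ge: "real (card J) * (real (card J) - 1) / 2 - real (card J) * \<mu>
                   \<le> (D + 1 - real (card J)) * sum c J"
  obtains j where "j \<in> J" "sum c J + (\<Sum>l\<in>J. of_bool (c l < c j)) - (D + 1) * c j \<le> \<mu>"
proof -
  define k where "k = real (card J)"
  have "(\<Sum>j\<in>J. sum c J + (\<Sum>l\<in>J. of_bool (c l < c j)) - (D + 1) * c j)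
      = (\<Sum>j\<in>J. \<Sum>l\<in>J. of_bool (c l < c j)) - (D + 1 - k) * sum c J"
    unfolding k_def by (simp add: sum.distrib sum_subtractf sum_distrib_left algebra_simps)
  also have "\<dots> \<le> k * \<mu>"
    using sum_sum_of_bool_less_le[OF fin, of c] sum_ge unfolding k_def by linarith
  finally show thesis
    using ex_le_of_sum_le_card_mult[OF fin ne] that unfolding k_def by blast
qed

lemma small_lift_exists:
  fixes y :: "'a \<Rightarrow> real" and D \<mu> :: real
  assumes fin: "finite J" and card_J: "real (card J) < D + 1"
    and mu: "real (card J) * (2 * D + 1 - real (card J)) \<le> 2 * (D + 1) * \<mu>"
  obtains w where "\<forall>l\<in>J. w l - y l \<in> \<int>" "sum w J \<le> \<mu>" "\<forall>l\<in>J. sum w J - (D + 1) * w l \<le> \<mu>"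
proof (cases "J = {}")
  case True
  then have "0 \<le> \<mu>" using card_J mu by (simp add: zero_le_mult_iff)
  then show thesis using that True by simp
next
  case False
  define k where "k = real (card J)"
  have gap: "0 < D + 1 - k" using card_J k_def by simp
  \<comment> \<open>sum c J \<ge> A is what the averaging step needs, and A \<le> \<mu> - k leaves room
    for raising up to k - 1 entries\<close>
  define A where "A = (k * (k - 1) / 2 - k * \<mu>) / (D + 1 - k)"
  have "k * (k - 1) / 2 - k * \<mu> \<le> (\<mu> - k) * (D + 1 - k)"
    using mu unfolding k_def by (simp add: field_simps)
  then have A_le: "A \<le> \<mu> - k"
    unfolding A_def using gap by (simp add: divide_le_eq)
  obtain c where c: "balanced_lift J y c" "A \<le> sum c J" "sum c J < A + 1"
    using balanced_lift_sum_in_unit_interval[OF fin False] by blast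
  have "k * (k - 1) / 2 - k * \<mu> \<le> (D + 1 - k) * sum c J"
    using mult_left_mono[OF c(2) less_imp_le[OF gap]] gap unfolding A_def by simp
  then obtain j where j: "j \<in> J" "sum c J + (\<Sum>l\<in>J. of_bool (c l < c j)) - (D + 1) * c j \<le> \<mu>"
    using ex_pivot_with_small_excess[OF fin False] unfolding k_def by blast
  define w where "w l = c l + of_bool (c l < c j)" for l
  have sum_w: "sum w J = sum c J + (\<Sum>l\<in>J. of_bool (c l < c j))"
    unfolding w_def by (simp add: sum.distrib)
  then have "sum w J \<le> \<mu>"
    using sum_of_bool_less_le[OF fin j(1), of c] c(3) A_le unfolding k_def by linarith
  moreover have "sum w J - (D + 1) * w l \<le> \<mu>" if "l \<in> J" for l
  proof -
    have "(D + 1) * c j \<le> (D + 1) * w l"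
      using balanced_lift_raise_below(2)[OF c(1) j(1) that] gap unfolding w_def k_def
      by (intro mult_left_mono) auto
    then show ?thesis using sum_w j(2) by linarith
  qed
  moreover have "\<forall>l\<in>J. w l - y l \<in> \<int>"
    unfolding w_def using balanced_lift_raise_below(1)[OF c(1) j(1)] by blast
  ultimately show thesis using that by blast
qed

lemma sparse_point_in_lattice_translates:
  fixes x :: "real ^ 'n"
  assumes support: "card {j. x $ j \<noteq> 0} \<le> i" and "i \<le> CARD('n)" and "0 < \<mu>"
    and mu: "real i * (2 * real CARD('n) + 1 - real i) \<le> 2 * (real CARD('n) + 1) * \<mu>"
  shows "x \<in> lattice_translates \<mu> terminal_simplex"
proof -
  define J where "J = {j. x $ j \<noteq> 0}"
  define d where "d = real CARD('n)"
  have "real (card J) * (2 * d + 1 - real (card J)) \<le> real i * (2 * d + 1 - real i)"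
  proof -
    have "0 \<le> (real i - real (card J)) * (2 * d + 1 - real i - real (card J))"
      using support assms(2) unfolding J_def d_def by (intro mult_nonneg_nonneg) auto
    then show ?thesis by (simp add: algebra_simps)
  qed
  then obtain w where w: "\<forall>l\<in>J. w l - x $ l \<in> \<int>" "sum w J \<le> \<mu>"
      "\<forall>l\<in>J. sum w J - (d + 1) * w l \<le> \<mu>"
    using small_lift_exists[of J d \<mu> "\<lambda>l. x $ l"] support assms(2) mu unfolding J_def d_def by auto
  define v :: "real ^ 'n" where "v = (\<chi> j. if j \<in> J then w j else 0)"
  have sum_v: "(\<Sum>j\<in>UNIV. v $ j) = sum w J"
    unfolding v_def by (simp add: sum.If_cases)
  have "(x - v) $ j \<in> \<int>" for j
  proof (cases "j \<in> J")
    case True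
    then have "- (w j - x $ j) \<in> \<int>" using w(1) Ints_minus by blast
    then show ?thesis using True by (simp add: v_def)
  next
    case False
    then show ?thesis by (simp add: v_def J_def)
  qed
  then have "x - v \<in> int_lattice" unfolding int_lattice_def by blast
  moreover have "(1 / \<mu>) *\<^sub>R v \<in> terminal_simplex"
  proof (rule mem_terminal_simplexI)
    show "(\<Sum>j\<in>UNIV. ((1 / \<mu>) *\<^sub>R v) $ j) \<le> 1"
      using sum_v w(2) \<open>0 < \<mu>\<close> by (simp add: sum_divide_distrib[symmetric])
    fix j
    have "sum w J - (d + 1) * v $ j \<le> \<mu>"
      using w(2,3) unfolding v_def by (cases "j \<in> J") auto
    then show "(\<Sum>j\<in>UNIV. ((1 / \<mu>) *\<^sub>R v) $ j) - (real CARD('n) + 1) * ((1 / \<mu>) *\<^sub>R v) $ j \<le> 1"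
      using sum_v \<open>0 < \<mu>\<close> unfolding d_def
      by (simp add: sum_divide_distrib[symmetric] diff_divide_distrib[symmetric])
  qed
  moreover have "x = \<mu> *\<^sub>R ((1 / \<mu>) *\<^sub>R v) + (x - v)"
    using \<open>0 < \<mu>\<close> by simp
  ultimately show ?thesis
    unfolding lattice_translates_def by blast
qed

theorem corollary5p9:
  fixes i :: nat
  assumes "1 \<le> i" and "i \<le> CARD('n::finite)"
  shows "covering_minimum i (terminal_simplex :: (real ^ 'n) set)
           \<le> real i / 2 * (1 + (real CARD('n) - real i) / (real CARD('n) + 1))"
proof -
  define \<mu> where "\<mu> = real i / 2 * (1 + (real CARD('n) - real i) / (real CARD('n) + 1))"
  have mu: "2 * (real CARD('n) + 1) * \<mu> = real i * (2 * real CARD('n) + 1 - real i)"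
    unfolding \<mu>_def by (simp add: field_simps)
  have "0 < \<mu>"
    unfolding \<mu>_def using assms by (simp add: add_pos_nonneg)
  have "covering_minimum i (terminal_simplex :: (real ^ 'n) set) \<le> \<mu>"
  proof (rule covering_minimum_le)
    fix U :: "(real ^ 'n) set"
    assume U: "affine U" "aff_dim U = int (CARD('n) - i)"
    then have "U \<noteq> {}" by (cases "U = {}") auto
    then obtain x where "x \<in> U" "int (card {j. x $ j \<noteq> 0}) + aff_dim U \<le> CARD('n)"
      using affine_contains_sparse_point U(1) by blast
    then have "x \<in> U" "card {j. x $ j \<noteq> 0} \<le> i"
      using U(2) assms(2) by simp_all
    then show "lattice_translates \<mu> terminal_simplex \<inter> U \<noteq> {}"
      using sparse_point_in_lattice_translates[of x i \<mu>] assms(2) \<open>0 < \<mu>\<close> mu by auto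
  qed (use \<open>0 < \<mu>\<close> in simp)
  then show ?thesis unfolding \<mu>_def .
qed

end
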